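(* Let $\Phi_1,\Phi_2$ be simple, stationary point processes on $\mathbb{R}^d$ such that $\Phi_1(B_O(r))\le_{uv}\Phi_2(B_O(r))$ for $r\ge0$. Then there exists $k_0\ge1$ such that for any bounded Borel $W\subset\mathbb{R}^d$: $\mathbb{E}\|C_k(\Phi_1,r)\cap W\|\ge\mathbb{E}\|C_k(\Phi_2,r)\cap W\|$ for all $1\le k\le k_0$, and $\mathbb{E}\|C_k(\Phi_1,r)\cap W\|\le\mathbb{E}\|C_k(\Phi_2,r)\cap W\|$ for all $k>k_0$.
   Context: $B_x(r)$ is the closed ball of radius $r$ centred at $x$, $O$ the origin, and $\|A\|$ the Lebesgue measure of $A$. The $k$-covered set is $C_k(\Phi,r)=\{x\in\mathbb{R}^d:\ x\in\bigcap_{i=1}^mB_{X_i}(r)$ for some $m\ge k$ and points $X_1,\dots,X_m\in\Phi\}$. Uniformly convex variable order: $X\le_{uv}Y$ if their densities (probability mass functions) $f,g$ satisfy $\mathrm{supp}(f)\subset\mathrm{supp}(g)$, $f/g$ is unimodal, and the distribution functions $F,G$ are not ordered (neither $F\le G$ nor $G\le F$ everywhere). *)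

theory Defs
  imports "HOL-Probability.Probability"
begin

text \<open>A simple point process on a Euclidean space 'e, given as a random set of points
  (simple: no multiplicities) on a probability space M, which is locally finite and
  measurable w.r.t. the usual sigma-algebra generated by the counting variables
  Phi(B), B bounded Borel.\<close>
definition simple_point_process :: "'a measure \<Rightarrow> ('a \<Rightarrow> 'e::euclidean_space set) \<Rightarrow> bool" where
  "simple_point_process M Phi \<longleftrightarrow> prob_space M \<and>
     (\<forall>\<omega>\<in>space M. \<forall>B. bounded B \<longrightarrow> finite (Phi \<omega> \<inter> B)) \<and>
     (\<forall>B. bounded B \<and> B \<in> sets borel \<longrightarrow>
          (\<lambda>\<omega>. card (Phi \<omega> \<inter> B)) \<in> measurable M (count_space UNIV))"

text \<open>Stationarity: all finite-dimensional distributions of the counts are invariant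
  under translation (Phi + x)(B) = Phi(B - x); equivalently the law of Phi + x is the law of Phi.\<close>
definition stationary_pp :: "'a measure \<Rightarrow> ('a \<Rightarrow> 'e::euclidean_space set) \<Rightarrow> bool" where
  "stationary_pp M Phi \<longleftrightarrow>
     (\<forall>(x::'e) (Bs::'e set list) (A::nat list set).
        (\<forall>B\<in>set Bs. bounded B \<and> B \<in> sets borel) \<longrightarrow>
        measure M {\<omega>\<in>space M. map (\<lambda>B. card (Phi \<omega> \<inter> B)) Bs \<in> A} =
        measure M {\<omega>\<in>space M. map (\<lambda>B. card ((\<lambda>p. p + x) ` Phi \<omega> \<inter> B)) Bs \<in> A})"

definition k_covered :: "'e::euclidean_space set \<Rightarrow> nat \<Rightarrow> real \<Rightarrow> 'e set" where
  "k_covered Phi k r = {x. \<exists>S. S \<subseteq> Phi \<and> finite S \<and> card S \<ge> k \<and> (\<forall>X\<in>S. x \<in> cball X r)}"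

definition unimodal_on :: "nat set \<Rightarrow> (nat \<Rightarrow> real) \<Rightarrow> bool" where
  "unimodal_on S h \<longleftrightarrow>
     (\<exists>m. \<forall>i\<in>S. \<forall>j\<in>S. (i \<le> j \<and> j \<le> m \<longrightarrow> h i \<le> h j) \<and> (m \<le> i \<and> i \<le> j \<longrightarrow> h j \<le> h i))
     \<or> mono_on S h"

definition uv_le :: "(nat \<Rightarrow> real) \<Rightarrow> (nat \<Rightarrow> real) \<Rightarrow> bool" where
  "uv_le f g \<longleftrightarrow>
     {n. f n \<noteq> 0} \<subseteq> {n. g n \<noteq> 0} \<and>
     unimodal_on {n. g n \<noteq> 0} (\<lambda>n. f n / g n) \<and>
     \<not> (\<forall>n. (\<Sum>i\<le>n. f i) \<le> (\<Sum>i\<le>n. g i)) \<and>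
     \<not> (\<forall>n. (\<Sum>i\<le>n. g i) \<le> (\<Sum>i\<le>n. f i))"

definition count_pmf :: "'a measure \<Rightarrow> ('a \<Rightarrow> 'e::euclidean_space set) \<Rightarrow> real \<Rightarrow> nat \<Rightarrow> real" where
  "count_pmf M Phi r n = measure M {\<omega>\<in>space M. card (Phi \<omega> \<inter> cball 0 r) = n}"

definition exp_cov_vol :: "'a measure \<Rightarrow> ('a \<Rightarrow> 'e::euclidean_space set) \<Rightarrow> nat \<Rightarrow> real \<Rightarrow> 'e set \<Rightarrow> ennreal" where
  "exp_cov_vol M Phi k r W = (\<integral>\<^sup>+ \<omega>. emeasure lebesgue (k_covered (Phi \<omega>) k r \<inter> W) \<partial>M)"

end

theory Submission
  imports Defs
begin

text \<open>A point x lies in the k-covered set iff the ball of radius r around x contains at least k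
  points of the process. By Fubini and stationarity, E||C_k(Phi, r) \<inter> W|| is therefore
  P(Phi(B_O(r)) \<ge> k) \<cdot> ||W||, so the claim says that the distribution functions of the two counts
  cross exactly once. Unimodality of the ratio f/g of the pmfs forbids the sign pattern +, -, + in
  f - g; since the partial sums of f - g tend to 0 and take both signs, they are first \<le> 0 and
  then \<ge> 0.\<close>

lemma uv_le_no_up_down_up:
  fixes f g :: "nat \<Rightarrow> real"
  assumes f0: "\<And>n. 0 \<le> f n" and g0: "\<And>n. 0 \<le> g n" and uv: "uv_le f g"
    and "i < j" "j < l" and up_i: "g i < f i" and up_l: "g l < f l"
  shows "g j \<le> f j"
proof (rule ccontr)
  assume "\<not> g j \<le> f j"
  then have down_j: "f j < g j" by simp
  have supp: "{n. f n \<noteq> 0} \<subseteq> {n. g n \<noteq> 0}"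
    and unimodal: "unimodal_on {n. g n \<noteq> 0} (\<lambda>n. f n / g n)"
    using uv unfolding uv_le_def by auto
  have "g j > 0" using down_j f0[of j] by linarith
  have "g i \<noteq> 0" "g l \<noteq> 0" using supp up_i up_l g0[of i] g0[of l] by force+
  with g0 have "g i > 0" "g l > 0" by (simp_all add: less_le)
  then have ratio_i: "f i / g i > 1" and ratio_l: "f l / g l > 1" and ratio_j: "f j / g j < 1"
    using up_i up_l down_j \<open>g j > 0\<close> by simp_all
  have in_supp: "i \<in> {n. g n \<noteq> 0}" "j \<in> {n. g n \<noteq> 0}" "l \<in> {n. g n \<noteq> 0}"
    using \<open>g i > 0\<close> \<open>g j > 0\<close> \<open>g l > 0\<close> by auto
  from unimodal show False
    unfolding unimodal_on_def
  proof (elim disjE exE)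
    fix m
    assume mode: "\<forall>a\<in>{n. g n \<noteq> 0}. \<forall>b\<in>{n. g n \<noteq> 0}.
      (a \<le> b \<and> b \<le> m \<longrightarrow> f a / g a \<le> f b / g b) \<and> (m \<le> a \<and> a \<le> b \<longrightarrow> f b / g b \<le> f a / g a)"
    show False
    proof (cases "j \<le> m")
      case True
      then have "f i / g i \<le> f j / g j" using mode in_supp \<open>i < j\<close> by auto
      with ratio_i ratio_j show False by simp
    next
      case False
      then have "f l / g l \<le> f j / g j" using mode in_supp \<open>j < l\<close> by auto
      with ratio_l ratio_j show False by simp
    qed
  next
    assume "mono_on {n. g n \<noteq> 0} (\<lambda>n. f n / g n)"
    then have "f i / g i \<le> f j / g j" using in_supp \<open>i < j\<close> by (auto simp: mono_on_def)
    with ratio_i ratio_j show False by simp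
  qed
qed

lemma partial_sums_change_sign_once:
  fixes d :: "nat \<Rightarrow> real"
  assumes no_dip: "\<And>i j l. i < j \<Longrightarrow> j < l \<Longrightarrow> 0 < d i \<Longrightarrow> 0 < d l \<Longrightarrow> 0 \<le> d j"
    and lim: "(\<lambda>n. \<Sum>i\<le>n. d i) \<longlonglongrightarrow> 0"
    and pos: "\<exists>n. 0 < (\<Sum>i\<le>n. d i)" and neg: "\<exists>n. (\<Sum>i\<le>n. d i) < 0"
  shows "\<exists>k0\<ge>1. \<forall>n. (n < k0 \<longrightarrow> (\<Sum>i\<le>n. d i) \<le> 0) \<and> (k0 \<le> n \<longrightarrow> 0 \<le> (\<Sum>i\<le>n. d i))"
proof -
  define c where "c n = (\<Sum>i\<le>n. d i)" for n
  have c_split: "c m = c n + (\<Sum>i\<in>{n<..m}. d i)" if "n \<le> m" for n m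
  proof -
    have "{..m} = {..n} \<union> {n<..m}" "{..n} \<inter> {n<..m} = {}" using that by auto
    then show ?thesis unfolding c_def by (simp add: sum.union_disjoint)
  qed
  have stays_nonneg: "0 \<le> c m" if "n < m" "0 < c n" for n m
    \<comment> \<open>otherwise a positive term up to n, a negative term in (n, m] and, since the sums return
      to 0, a positive term after m would form a dip\<close>
  proof (rule ccontr)
    assume "\<not> 0 \<le> c m"
    then have "c m < 0" by simp
    have "0 < (\<Sum>i\<le>n. d i)" using \<open>0 < c n\<close> by (simp add: c_def)
    then obtain i where "i \<in> {..n}" "0 < d i" using sum_nonpos[of "{..n}" d] by (meson not_le)
    have "(\<Sum>j\<in>{n<..m}. d j) < 0" using c_split[of n m] \<open>n < m\<close> \<open>0 < c n\<close> \<open>c m < 0\<close> by linarith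
    then obtain j where "j \<in> {n<..m}" "d j < 0" using sum_nonneg[of "{n<..m}" d] by (meson not_le)
    obtain l where "m < l" "0 < d l"
    proof -
      have "\<not> (\<forall>l>m. d l \<le> 0)"
      proof
        assume "\<forall>l>m. d l \<le> 0"
        then have "c p \<le> c m" if "m \<le> p" for p
        proof -
          have "(\<Sum>i\<in>{m<..p}. d i) \<le> 0" using \<open>\<forall>l>m. d l \<le> 0\<close> by (intro sum_nonpos) auto
          then show ?thesis using c_split[OF that] by linarith
        qed
        then have "0 \<le> c m" by (intro LIMSEQ_le_const2[OF lim[folded c_def]]) auto
        with \<open>c m < 0\<close> show False by simp
      qed
      then show ?thesis using that by (auto simp: not_le)
    qed
    have "0 \<le> d j" using no_dip[of i j l] \<open>i \<in> {..n}\<close> \<open>j \<in> {n<..m}\<close> \<open>m < l\<close> \<open>0 < d i\<close> \<open>0 < d l\<close> by auto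
    with \<open>d j < 0\<close> show False by simp
  qed
  define k0 where "k0 = (LEAST n. 0 < c n)"
  have "0 < c k0" unfolding k0_def using pos[folded c_def] by (rule LeastI_ex)
  have before: "c n \<le> 0" if "n < k0" for n
    using not_less_Least[OF that[unfolded k0_def]] by simp
  have after: "0 \<le> c n" if "k0 \<le> n" for n
    using stays_nonneg[of k0 n] \<open>0 < c k0\<close> that by (cases "n = k0") auto
  have "k0 \<noteq> 0"
  proof
    assume "k0 = 0"
    obtain n where "c n < 0" using neg by (auto simp: c_def)
    moreover have "0 \<le> c n" using after \<open>k0 = 0\<close> by simp
    ultimately show False by simp
  qed
  with before after show ?thesis unfolding c_def by (intro exI[of _ k0]) auto
qed

lemma uv_le_cdf_cross_once:
  fixes f g :: "nat \<Rightarrow> real"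
  assumes f0: "\<And>n. 0 \<le> f n" and g0: "\<And>n. 0 \<le> g n" and uv: "uv_le f g"
    and lim: "(\<lambda>n. (\<Sum>i\<le>n. f i) - (\<Sum>i\<le>n. g i)) \<longlonglongrightarrow> 0"
  shows "\<exists>k0\<ge>1. \<forall>n. (n < k0 \<longrightarrow> (\<Sum>i\<le>n. f i) \<le> (\<Sum>i\<le>n. g i)) \<and>
                    (k0 \<le> n \<longrightarrow> (\<Sum>i\<le>n. g i) \<le> (\<Sum>i\<le>n. f i))"
proof -
  have "\<exists>k0\<ge>1. \<forall>n. (n < k0 \<longrightarrow> (\<Sum>i\<le>n. f i - g i) \<le> 0) \<and> (k0 \<le> n \<longrightarrow> 0 \<le> (\<Sum>i\<le>n. f i - g i))"
  proof (rule partial_sums_change_sign_once)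
    show "0 \<le> f j - g j" if "i < j" "j < l" "0 < f i - g i" "0 < f l - g l" for i j l
      using uv_le_no_up_down_up[OF f0 g0 uv that(1,2)] that(3,4) by simp
    show "(\<lambda>n. \<Sum>i\<le>n. f i - g i) \<longlonglongrightarrow> 0" using lim by (simp add: sum_subtractf)
    show "\<exists>n. 0 < (\<Sum>i\<le>n. f i - g i)" "\<exists>n. (\<Sum>i\<le>n. f i - g i) < 0"
      using uv unfolding uv_le_def by (auto simp: sum_subtractf not_le)
  qed
  then show ?thesis by (simp add: sum_subtractf)
qed

lemma k_covered_iff_card_Int_cball:
  assumes "finite (P \<inter> cball x r)"
  shows "x \<in> k_covered P k r \<longleftrightarrow> k \<le> card (P \<inter> cball x r)"
proof
  assume "x \<in> k_covered P k r"
  then obtain S where S: "S \<subseteq> P" "card S \<ge> k" "\<forall>X\<in>S. x \<in> cball X r"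
    unfolding k_covered_def by blast
  then have "S \<subseteq> P \<inter> cball x r" by (auto simp: dist_commute)
  with assms S(2) show "k \<le> card (P \<inter> cball x r)" using card_mono order_trans by blast
next
  assume "k \<le> card (P \<inter> cball x r)"
  with assms show "x \<in> k_covered P k r" unfolding k_covered_def
    by (intro CollectI exI[of _ "P \<inter> cball x r"]) (auto simp: dist_commute)
qed

lemma cball_Int_eq_larger_cball:
  fixes x :: "'a::metric_space"
  assumes "finite (P \<inter> cball x (r + 1))"
  obtains e where "e > 0" "P \<inter> cball x (r + e) = P \<inter> cball x r"
proof -
  define F where "F = P \<inter> cball x (r + 1) - cball x r"
  define e where "e = Min (insert 1 ((\<lambda>y. dist x y - r) ` F)) / 2"
  have "finite F" using assms by (simp add: F_def)
  then have "e > 0" by (auto simp: e_def F_def)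
  have "e \<le> 1 / 2" using \<open>finite F\<close> by (simp add: e_def)
  have "P \<inter> cball x (r + e) \<subseteq> cball x r"
  proof
    fix y assume y: "y \<in> P \<inter> cball x (r + e)"
    show "y \<in> cball x r"
    proof (rule ccontr)
      assume "y \<notin> cball x r"
      with y \<open>e \<le> 1 / 2\<close> have "y \<in> F" by (auto simp: F_def)
      with \<open>finite F\<close> have "2 * e \<le> dist x y - r" unfolding e_def by simp
      with y \<open>e > 0\<close> show False by simp
    qed
  qed
  with \<open>e > 0\<close> show ?thesis by (intro that[of e]) auto
qed

text \<open>Replaces the ball around a moving centre x by countably many fixed balls; this is what makes
  the count jointly measurable in the sample and the centre.\<close>

lemma card_Int_cball_ge_iff_dense:
  fixes x :: "'a::metric_space"
  assumes dense: "\<And>y e. e > 0 \<Longrightarrow> \<exists>i. dist (q i) y < e"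
    and locally_finite: "\<And>B. bounded B \<Longrightarrow> finite (P \<inter> B)"
  shows "k \<le> card (P \<inter> cball x r) \<longleftrightarrow>
    (\<forall>n::nat. \<exists>i. dist (q i) x < 1 / Suc n \<and> k \<le> card (P \<inter> cball (q i) (r + 1 / Suc n)))"
proof
  assume k: "k \<le> card (P \<inter> cball x r)"
  show "\<forall>n::nat. \<exists>i. dist (q i) x < 1 / Suc n \<and> k \<le> card (P \<inter> cball (q i) (r + 1 / Suc n))"
  proof
    fix n :: nat
    obtain i where i: "dist (q i) x < 1 / Suc n" using dense[of "1 / Suc n" x] by auto
    then have "cball x r \<subseteq> cball (q i) (r + 1 / Suc n)"
      by (smt (verit, best) dist_triangle mem_cball subsetI)
    then have "card (P \<inter> cball x r) \<le> card (P \<inter> cball (q i) (r + 1 / Suc n))"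
      using locally_finite[of "cball (q i) (r + 1 / Suc n)"] by (intro card_mono) auto
    with i k show "\<exists>i. dist (q i) x < 1 / Suc n \<and> k \<le> card (P \<inter> cball (q i) (r + 1 / Suc n))"
      by auto
  qed
next
  assume approx: "\<forall>n::nat. \<exists>i. dist (q i) x < 1 / Suc n \<and> k \<le> card (P \<inter> cball (q i) (r + 1 / Suc n))"
  obtain e where "e > 0" and same: "P \<inter> cball x (r + e) = P \<inter> cball x r"
    using cball_Int_eq_larger_cball locally_finite by blast
  obtain n :: nat where n: "inverse (Suc n) < e / 2"
    using reals_Archimedean[of "e / 2"] \<open>e > 0\<close> by auto
  obtain i where i: "dist (q i) x < 1 / Suc n" "k \<le> card (P \<inter> cball (q i) (r + 1 / Suc n))"
    using approx by blast
  have "cball (q i) (r + 1 / Suc n) \<subseteq> cball x (r + e)"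
  proof
    fix y assume "y \<in> cball (q i) (r + 1 / Suc n)"
    moreover have "dist x y \<le> dist (q i) x + dist (q i) y" by (rule dist_triangle3)
    moreover have "1 / real (Suc n) < e / 2" using n by (simp add: inverse_eq_divide)
    ultimately show "y \<in> cball x (r + e)" using i(1) by simp
  qed
  then have "card (P \<inter> cball (q i) (r + 1 / Suc n)) \<le> card (P \<inter> cball x r)"
    unfolding same[symmetric] using locally_finite[of "cball x (r + e)"] by (intro card_mono) auto
  with i(2) show "k \<le> card (P \<inter> cball x r)" by simp
qed

lemma simple_point_process_count_sets:
  assumes "simple_point_process M Phi"
  shows "{\<omega>\<in>space M. Q (card (Phi \<omega> \<inter> cball x r))} \<in> sets M"
proof -
  have "(\<lambda>\<omega>. card (Phi \<omega> \<inter> cball x r)) \<in> measurable M (count_space UNIV)"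
    using assms unfolding simple_point_process_def by (simp add: borel_closed)
  from measurable_sets[OF this, of "Collect Q"] show ?thesis
    by (simp add: vimage_def Int_def conj_commute)
qed

lemma dense_sequence_exists:
  obtains q :: "nat \<Rightarrow> 'a::{metric_space, second_countable_topology}"
  where "\<And>y e. e > 0 \<Longrightarrow> \<exists>i. dist (q i) y < e"
proof -
  obtain D :: "'a set" where D: "countable D" "\<And>X. open X \<Longrightarrow> X \<noteq> {} \<Longrightarrow> \<exists>d\<in>D. d \<in> X"
    using countable_dense_setE by blast
  have "\<exists>i. dist (from_nat_into D i) y < e" if "e > 0" for y e
  proof -
    obtain d where "d \<in> D" "d \<in> ball y e" using D(2)[of "ball y e"] \<open>e > 0\<close> by auto
    then show ?thesis using from_nat_into_to_nat_on[OF D(1)] by (metis dist_commute mem_ball)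
  qed
  then show ?thesis by (rule that)
qed

lemma pred_card_Int_cball_ge:
  fixes Phi :: "'a \<Rightarrow> 'e::euclidean_space set"
  assumes spp: "simple_point_process M Phi"
  shows "Measurable.pred (M \<Otimes>\<^sub>M lborel) (\<lambda>p. k \<le> card (Phi (fst p) \<inter> cball (snd p) r))"
proof -
  obtain q :: "nat \<Rightarrow> 'e" where dense: "\<And>y e. e > 0 \<Longrightarrow> \<exists>i. dist (q i) y < e"
    using dense_sequence_exists by blast
  have count_pred: "Measurable.pred (M \<Otimes>\<^sub>M lborel) (\<lambda>p. k \<le> card (Phi (fst p) \<inter> cball c s))" for c s
  proof -
    have "Measurable.pred M (\<lambda>\<omega>. k \<le> card (Phi \<omega> \<inter> cball c s))"
      using simple_point_process_count_sets[OF spp, of "\<lambda>n. k \<le> n"] by (simp add: pred_def)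
    then show ?thesis by measurable
  qed
  have approx_pred: "Measurable.pred (M \<Otimes>\<^sub>M lborel) (\<lambda>p. \<forall>n::nat. \<exists>i. dist (q i) (snd p) < 1 / Suc n \<and>
      k \<le> card (Phi (fst p) \<inter> cball (q i) (r + 1 / Suc n)))"
    using count_pred by measurable
  have iff: "k \<le> card (Phi \<omega> \<inter> cball x r) \<longleftrightarrow> (\<forall>n::nat. \<exists>i. dist (q i) x < 1 / Suc n \<and>
      k \<le> card (Phi \<omega> \<inter> cball (q i) (r + 1 / Suc n)))" if "\<omega> \<in> space M" for \<omega> x
    using spp that unfolding simple_point_process_def
    by (intro card_Int_cball_ge_iff_dense dense) blast+
  show ?thesis
    by (rule measurable_cong[THEN iffD2, OF _ approx_pred]) (auto simp: iff space_pair_measure)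
qed

lemma stationary_pp_measure_count_cball:
  fixes Phi :: "'a \<Rightarrow> 'e::euclidean_space set"
  assumes "stationary_pp M Phi"
  shows "measure M {\<omega>\<in>space M. Q (card (Phi \<omega> \<inter> cball x r))} =
         measure M {\<omega>\<in>space M. Q (card (Phi \<omega> \<inter> cball 0 r))}"
proof -
  have card_shift: "card ((\<lambda>p. p - x) ` S \<inter> cball 0 r) = card (S \<inter> cball x r)" for S
  proof -
    have "(\<lambda>p. p - x) ` S \<inter> cball 0 r = (\<lambda>p. p - x) ` (S \<inter> cball x r)"
      by (auto simp: dist_norm norm_minus_commute)
    then show ?thesis by (simp add: card_image)
  qed
  show ?thesis
    using assms[unfolded stationary_pp_def, rule_format, of "[cball 0 r]" "{[n] | n. Q n}" "- x"]
    by (simp add: card_shift)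
qed

lemma measure_count_cball_le:
  fixes Phi :: "'a \<Rightarrow> 'e::euclidean_space set"
  assumes spp: "simple_point_process M Phi"
  shows "measure M {\<omega>\<in>space M. card (Phi \<omega> \<inter> cball 0 r) \<le> n} = (\<Sum>i\<le>n. count_pmf M Phi r i)"
proof (induction n)
  case 0
  then show ?case by (simp add: count_pmf_def)
next
  case (Suc n)
  interpret prob_space M using spp by (simp add: simple_point_process_def)
  have "{\<omega>\<in>space M. card (Phi \<omega> \<inter> cball 0 r) \<le> Suc n} =
        {\<omega>\<in>space M. card (Phi \<omega> \<inter> cball 0 r) \<le> n} \<union> {\<omega>\<in>space M. card (Phi \<omega> \<inter> cball 0 r) = Suc n}"
    by auto
  then have "measure M {\<omega>\<in>space M. card (Phi \<omega> \<inter> cball 0 r) \<le> Suc n} =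
     measure M {\<omega>\<in>space M. card (Phi \<omega> \<inter> cball 0 r) \<le> n} + count_pmf M Phi r (Suc n)"
    unfolding count_pmf_def
    by (simp add: finite_measure_Union disjoint_iff simple_point_process_count_sets[OF spp, of "\<lambda>m. m \<le> n"]
        simple_point_process_count_sets[OF spp, of "\<lambda>m. m = Suc n"])
  with Suc show ?case by simp
qed

lemma measure_count_cball_ge:
  fixes Phi :: "'a \<Rightarrow> 'e::euclidean_space set"
  assumes spp: "simple_point_process M Phi" and "1 \<le> k"
  shows "measure M {\<omega>\<in>space M. k \<le> card (Phi \<omega> \<inter> cball 0 r)} = 1 - (\<Sum>i\<le>k - 1. count_pmf M Phi r i)"
proof -
  interpret prob_space M using spp by (simp add: simple_point_process_def)
  have "measure M {\<omega>\<in>space M. k \<le> card (Phi \<omega> \<inter> cball 0 r)} =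
        measure M (space M - {\<omega>\<in>space M. card (Phi \<omega> \<inter> cball 0 r) \<le> k - 1})"
    using \<open>1 \<le> k\<close> by (intro arg_cong[where f = "measure M"]) auto
  also have "\<dots> = 1 - measure M {\<omega>\<in>space M. card (Phi \<omega> \<inter> cball 0 r) \<le> k - 1}"
    by (rule prob_compl[OF simple_point_process_count_sets[OF spp]])
  finally show ?thesis unfolding measure_count_cball_le[OF spp] .
qed

lemma sum_count_pmf_tendsto_1:
  fixes Phi :: "'a \<Rightarrow> 'e::euclidean_space set"
  assumes spp: "simple_point_process M Phi"
  shows "(\<lambda>n. \<Sum>i\<le>n. count_pmf M Phi r i) \<longlonglongrightarrow> 1"
proof -
  interpret prob_space M using spp by (simp add: simple_point_process_def)
  define A where "A n = {\<omega>\<in>space M. card (Phi \<omega> \<inter> cball 0 r) \<le> n}" for n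
  have "A n \<in> events" for n
    unfolding A_def by (rule simple_point_process_count_sets[OF spp])
  moreover have "incseq A" by (auto simp: A_def incseq_def)
  ultimately have "(\<lambda>n. measure M (A n)) \<longlonglongrightarrow> measure M (\<Union>n. A n)"
    by (intro finite_Lim_measure_incseq) auto
  moreover have "(\<Union>n. A n) = space M" by (auto simp: A_def)
  ultimately show ?thesis by (simp add: A_def measure_count_cball_le[OF spp] prob_space)
qed

lemma exp_cov_vol_eq_stationary:
  fixes Phi :: "'a \<Rightarrow> 'e::euclidean_space set"
  assumes spp: "simple_point_process M Phi" and st: "stationary_pp M Phi" and W: "W \<in> sets borel"
  shows "exp_cov_vol M Phi k r W =
    ennreal (measure M {\<omega>\<in>space M. k \<le> card (Phi \<omega> \<inter> cball 0 r)}) * emeasure lborel W"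
proof -
  interpret prob_space M using spp by (simp add: simple_point_process_def)
  interpret pair_sigma_finite M lborel
    by (simp add: pair_sigma_finite_def sigma_finite_measure_axioms lborel.sigma_finite_measure_axioms)
  define covered where "covered \<omega> = {x \<in> W. k \<le> card (Phi \<omega> \<inter> cball x r)}" for \<omega>
  define p where "p = measure M {\<omega>\<in>space M. k \<le> card (Phi \<omega> \<inter> cball 0 r)}"
  have covered_pred: "Measurable.pred (M \<Otimes>\<^sub>M lborel) (\<lambda>z. snd z \<in> covered (fst z))"
    unfolding covered_def using pred_card_Int_cball_ge[OF spp] W by measurable
  then have covered_meas: "(\<lambda>(\<omega>, x). indicator (covered \<omega>) x :: ennreal) \<in> borel_measurable (M \<Otimes>\<^sub>M lborel)"
    by measurable
  have covered_sets: "covered \<omega> \<in> sets lborel" if "\<omega> \<in> space M" for \<omega>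
    using sets_Pair1[OF covered_pred[unfolded pred_def], of \<omega>] that
    by (simp add: vimage_def space_pair_measure)
  have covered_vol: "emeasure lebesgue (k_covered (Phi \<omega>) k r \<inter> W) = (\<integral>\<^sup>+ x. indicator (covered \<omega>) x \<partial>lborel)"
    if "\<omega> \<in> space M" for \<omega>
  proof -
    have "k_covered (Phi \<omega>) k r \<inter> W = covered \<omega>"
      using spp that k_covered_iff_card_Int_cball
      unfolding simple_point_process_def covered_def by blast
    then show ?thesis using covered_sets[OF that] by (simp add: emeasure_completion main_part_sets)
  qed
  have coverage_prob: "(\<integral>\<^sup>+ \<omega>. indicator (covered \<omega>) x \<partial>M) = ennreal p * indicator W x" for x
  proof -
    define E where "E = {\<omega>\<in>space M. k \<le> card (Phi \<omega> \<inter> cball x r)}"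
    have "(\<integral>\<^sup>+ \<omega>. indicator (covered \<omega>) x \<partial>M) = (\<integral>\<^sup>+ \<omega>. indicator W x * indicator E \<omega> \<partial>M)"
      by (intro nn_integral_cong) (auto simp: covered_def E_def indicator_def)
    also have "\<dots> = indicator W x * emeasure M E"
      by (simp add: E_def nn_integral_cmult_indicator simple_point_process_count_sets[OF spp])
    also have "\<dots> = ennreal p * indicator W x"
      using stationary_pp_measure_count_cball[OF st, of "\<lambda>n. k \<le> n" x r]
      by (simp add: emeasure_eq_measure E_def p_def mult.commute)
    finally show ?thesis .
  qed
  have "exp_cov_vol M Phi k r W = (\<integral>\<^sup>+ \<omega>. (\<integral>\<^sup>+ x. indicator (covered \<omega>) x \<partial>lborel) \<partial>M)"
    unfolding exp_cov_vol_def by (intro nn_integral_cong) (simp add: covered_vol)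
  also have "\<dots> = (\<integral>\<^sup>+ x. (\<integral>\<^sup>+ \<omega>. indicator (covered \<omega>) x \<partial>M) \<partial>lborel)"
    using Fubini'[OF covered_meas] by simp
  also have "\<dots> = ennreal p * emeasure lborel W"
    using W by (simp add: coverage_prob nn_integral_cmult_indicator)
  finally show ?thesis unfolding p_def .
qed

lemma exp_cov_vol_mono_cdf:
  fixes Phi1 :: "'a \<Rightarrow> 'e::euclidean_space set" and Phi2 :: "'b \<Rightarrow> 'e set"
  assumes "simple_point_process M1 Phi1" "stationary_pp M1 Phi1"
    and "simple_point_process M2 Phi2" "stationary_pp M2 Phi2"
    and "1 \<le> k" "W \<in> sets borel"
    and "(\<Sum>i\<le>k - 1. count_pmf M2 Phi2 r i) \<le> (\<Sum>i\<le>k - 1. count_pmf M1 Phi1 r i)"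
  shows "exp_cov_vol M1 Phi1 k r W \<le> exp_cov_vol M2 Phi2 k r W"
  using assms
  by (simp add: exp_cov_vol_eq_stationary measure_count_cball_ge ennreal_leI mult_right_mono)

theorem proposition6p4:
  fixes M1 :: "'a measure" and M2 :: "'b measure"
    and Phi1 :: "'a \<Rightarrow> 'e::euclidean_space set" and Phi2 :: "'b \<Rightarrow> 'e set"
  assumes "simple_point_process M1 Phi1" "stationary_pp M1 Phi1"
    and "simple_point_process M2 Phi2" "stationary_pp M2 Phi2"
    and "\<forall>r>0. uv_le (count_pmf M1 Phi1 r) (count_pmf M2 Phi2 r)"
  shows "\<forall>r>0. \<exists>k0\<ge>1. \<forall>W. bounded W \<and> W \<in> sets borel \<longrightarrow>
           (\<forall>k. 1 \<le> k \<and> k \<le> k0 \<longrightarrow> exp_cov_vol M1 Phi1 k r W \<ge> exp_cov_vol M2 Phi2 k r W) \<and>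
           (\<forall>k>k0. exp_cov_vol M1 Phi1 k r W \<le> exp_cov_vol M2 Phi2 k r W)"
proof (intro allI impI)
  fix r :: real assume "r > 0"
  define F1 where "F1 n = (\<Sum>i\<le>n. count_pmf M1 Phi1 r i)" for n
  define F2 where "F2 n = (\<Sum>i\<le>n. count_pmf M2 Phi2 r i)" for n
  have "(\<lambda>n. F1 n - F2 n) \<longlonglongrightarrow> 1 - 1"
    unfolding F1_def F2_def using assms(1,3) by (intro tendsto_diff sum_count_pmf_tendsto_1)
  then obtain k0 where "k0 \<ge> 1" and crossing: "\<And>n. (n < k0 \<longrightarrow> F1 n \<le> F2 n) \<and> (k0 \<le> n \<longrightarrow> F2 n \<le> F1 n)"
    using uv_le_cdf_cross_once[of "count_pmf M1 Phi1 r" "count_pmf M2 Phi2 r"] assms(5) \<open>r > 0\<close>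
    unfolding F1_def F2_def by (auto simp: count_pmf_def)
  have "exp_cov_vol M2 Phi2 k r W \<le> exp_cov_vol M1 Phi1 k r W"
    if "1 \<le> k" "k \<le> k0" "W \<in> sets borel" for k W
    using exp_cov_vol_mono_cdf[OF assms(3,4,1,2)] crossing[of "k - 1"] that by (simp add: F1_def F2_def)
  moreover have "exp_cov_vol M1 Phi1 k r W \<le> exp_cov_vol M2 Phi2 k r W"
    if "k0 < k" "W \<in> sets borel" for k W
    using exp_cov_vol_mono_cdf[OF assms(1-4)] crossing[of "k - 1"] that \<open>k0 \<ge> 1\<close> by (simp add: F1_def F2_def)
  ultimately show "\<exists>k0\<ge>1. \<forall>W. bounded W \<and> W \<in> sets borel \<longrightarrow>
           (\<forall>k. 1 \<le> k \<and> k \<le> k0 \<longrightarrow> exp_cov_vol M1 Phi1 k r W \<ge> exp_cov_vol M2 Phi2 k r W) \<and>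
           (\<forall>k>k0. exp_cov_vol M1 Phi1 k r W \<le> exp_cov_vol M2 Phi2 k r W)"
    using \<open>k0 \<ge> 1\<close> by blast
qed

end
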